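(* Let $\mathcal X$ be a nonsingular plane curve of degree $r+1$ and genus $g$ over $\mathbf F_q$ with at least one $\mathbf F_q$-rational point. Let $N$ be an integer with $0\le N\le 2g-2$. Write $\lfloor N/2\rfloor=\alpha r+\beta$ with $0\le\beta<r$, and assume $\alpha\ge1$. (1) If $\lfloor N/2\rfloor$ is a gap of $\mathcal X$, then $R(N)=\min\{\tilde\ell(\lfloor N/2\rfloor)+\tilde\ell(\lceil N/2\rceil),\ \tilde\ell(\alpha r-1)+\tilde\ell(N-\alpha r+1)\}$. (2) If $\lfloor N/2\rfloor\in GS(\mathcal X)$, then $R(N)=\tilde\ell(\alpha r-1)+\tilde\ell(N-\alpha r+1)$.
   Context: $\ell(A)=\dim_{\mathbf F_q}\mathcal L(A)$. For $i\ge1$, $\gamma_i=\min\{\deg A: A\ \mathbf F_q\text{-rational divisor},\ \ell(A)\ge i\}$, and $GS(\mathcal X)=\{\gamma_i:i\ge1\}$. For such a plane curve it is known that $GS(\mathcal X)$ is the numerical semigroup generated by $r$ and $r+1$, and that $g=r(r-1)/2$. Let $\mathbf N'=\{-1,0,1,\dots\}$; a gap is an element of $\mathbf N'\setminus GS(\mathcal X)$. Define $\tilde\ell(-1)=0$ and $\tilde\ell(b)=\max\{i\ge1:\gamma_i\le b\}$ for $b\ge0$. For $-1\le M\le 2g-2$, let $R(M)=\min\{\tilde\ell(a)+\tilde\ell(b):a,b\in\mathbf N',\ a+b=M\}$. *)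

theory Defs
  imports Main "HOL-Library.Infinite_Set"
begin

text \<open>Weierstrass semigroup GS of a nonsingular plane curve of degree r+1:
  the numerical semigroup generated by r and r+1 (as a set of naturals).\<close>
definition GSnat :: "nat \<Rightarrow> nat set" where
  "GSnat r = {a * r + b * (r + 1) | a b. True}"

definition GS :: "nat \<Rightarrow> int set" where
  "GS r = int ` GSnat r"

definition gamma :: "nat \<Rightarrow> nat \<Rightarrow> int" where
  "gamma r i = int (enumerate (GSnat r) (i - 1))"

definition ltilde :: "nat \<Rightarrow> int \<Rightarrow> nat" where
  "ltilde r b = (if b = -1 then 0 else Max {i. i \<ge> 1 \<and> gamma r i \<le> b})"

definition R :: "nat \<Rightarrow> int \<Rightarrow> nat" where
  "R r M = Min {ltilde r a + ltilde r b | a b. a \<ge> -1 \<and> b \<ge> -1 \<and> a + b = M}"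

end

theory Submission
  imports Defs
begin

text \<open>
  Since the semigroup is generated by \<open>r\<close> and \<open>r + 1\<close>, a natural number \<open>s\<close> lies in it iff
  \<open>s mod r \<le> s div r\<close>. Counting its elements up to \<open>x = k r + j\<close> (\<open>0 \<le> j < r\<close>, \<open>x < r\<^sup>2\<close>)
  gives the closed form \<open>\<ell>(x) = k(k+1)/2 + min j k + 1\<close>, valid also for \<open>x = -1\<close>.
  Its increments \<open>\<ell>(x + r) - \<ell>(x) = k + 1 + [k < j]\<close> are nondecreasing in \<open>x\<close>, so moving
  \<open>a\<close> by \<open>r\<close> towards \<open>N/2\<close> does not increase \<open>\<ell>(a) + \<ell>(N - a)\<close>. With the symmetry
  \<open>a \<leftrightarrow> N - a\<close> this confines the minimum to the window \<open>N - r \<le> 2a \<le> N\<close>, where a case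
  analysis of the closed form shows that it is attained at \<open>\<lfloor>N/2\<rfloor>\<close> or at \<open>\<alpha> r - 1\<close>, and at
  the latter when \<open>\<beta> \<le> \<alpha>\<close>, i.e. when \<open>\<lfloor>N/2\<rfloor>\<close> is not a gap.
\<close>

lemma GSnat_iff_mod_le_div:
  assumes "r \<ge> 1"
  shows "s \<in> GSnat r \<longleftrightarrow> s mod r \<le> s div r"
proof
  assume "s \<in> GSnat r"
  then obtain a b where s: "s = a * r + b * (r + 1)"
    unfolding GSnat_def by blast
  then have "s = (a + b + b div r) * r + b mod r"
    by (simp add: algebra_simps)
  then have "s mod r = b mod r" "s div r = a + b + b div r"
    using assms by simp_all
  then show "s mod r \<le> s div r"
    by (metis le_add2 mod_less_eq_dividend trans_le_add1 add.commute le_trans)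
next
  assume "s mod r \<le> s div r"
  then have "s = (s div r - s mod r) * r + (s mod r) * (r + 1)"
    by (simp add: algebra_simps diff_mult_distrib)
  then show "s \<in> GSnat r"
    unfolding GSnat_def by blast
qed

lemma GS_iff_mod_le_div:
  fixes x :: int
  assumes "r \<ge> 1" "0 \<le> x"
  shows "x \<in> GS r \<longleftrightarrow> x mod int r \<le> x div int r"
proof -
  have "x \<in> GS r \<longleftrightarrow> nat x \<in> GSnat r"
    unfolding GS_def using assms(2) by (auto simp: image_iff intro!: bexI[of _ "nat x"])
  also have "\<dots> \<longleftrightarrow> nat x mod r \<le> nat x div r"
    using GSnat_iff_mod_le_div[OF assms(1)] .
  also have "\<dots> \<longleftrightarrow> int (nat x mod r) \<le> int (nat x div r)"
    by (rule of_nat_le_iff[symmetric])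
  also have "\<dots> \<longleftrightarrow> x mod int r \<le> x div int r"
    using assms(2) by (simp add: zmod_int zdiv_int)
  finally show ?thesis .
qed

lemma infinite_GSnat: "infinite (GSnat r)" if "r \<ge> 1"
proof -
  have "m * r \<in> GSnat r" for m
    unfolding GSnat_def by (rule CollectI, rule exI[of _ m], rule exI[of _ 0]) simp
  moreover have "m \<le> m * r" for m
    using that by simp
  ultimately show ?thesis
    unfolding infinite_nat_iff_unbounded_le by blast
qed

lemma enumerate_le_iff_less_card:
  fixes S :: "nat set"
  assumes S: "infinite S"
  shows "enumerate S n \<le> b \<longleftrightarrow> n < card {s \<in> S. s \<le> b}"
proof
  assume le: "enumerate S n \<le> b"
  have "enumerate S k \<in> {s \<in> S. s \<le> b}" if "k \<le> n" for k
    using enumerate_in_set[OF S] enumerate_mono_le_iff[OF S, of k n] that le by simp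
  then have "enumerate S ` {..n} \<subseteq> {s \<in> S. s \<le> b}"
    by auto
  then have "card (enumerate S ` {..n}) \<le> card {s \<in> S. s \<le> b}"
    by (rule card_mono[rotated]) simp
  moreover have "card (enumerate S ` {..n}) = Suc n"
    using inj_enumerate[OF S] by (simp add: card_image inj_on_subset)
  ultimately show "n < card {s \<in> S. s \<le> b}"
    by simp
next
  assume less: "n < card {s \<in> S. s \<le> b}"
  show "enumerate S n \<le> b"
  proof (rule ccontr)
    assume "\<not> enumerate S n \<le> b"
    have "{s \<in> S. s \<le> b} \<subseteq> enumerate S ` {..<n}"
    proof
      fix s
      assume "s \<in> {s \<in> S. s \<le> b}"
      moreover obtain k where "enumerate S k = s"
        using enumerate_Ex[OF S] calculation by blast
      ultimately show "s \<in> enumerate S ` {..<n}"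
        using \<open>\<not> enumerate S n \<le> b\<close> enumerate_mono_iff[OF S, of k n] by auto
    qed
    then have "card {s \<in> S. s \<le> b} \<le> card (enumerate S ` {..<n})"
      by (rule card_mono[rotated]) simp
    also have "\<dots> \<le> n"
      using card_image_le[of "{..<n}" "enumerate S"] by simp
    finally show False
      using less by simp
  qed
qed

lemma ltilde_eq_card:
  assumes "r \<ge> 1" "0 \<le> b"
  shows "ltilde r b = card {s \<in> GSnat r. s \<le> nat b}"
proof -
  define c where "c = card {s \<in> GSnat r. s \<le> nat b}"
  have gamma_le_iff: "gamma r i \<le> b \<longleftrightarrow> i - 1 < c" for i
  proof -
    have "gamma r i \<le> b \<longleftrightarrow> enumerate (GSnat r) (i - 1) \<le> nat b"
      unfolding gamma_def le_nat_iff[OF assms(2)] ..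
    also have "\<dots> \<longleftrightarrow> i - 1 < c"
      unfolding c_def by (rule enumerate_le_iff_less_card[OF infinite_GSnat[OF assms(1)]])
    finally show ?thesis .
  qed
  have "{i. i \<ge> 1 \<and> gamma r i \<le> b} = {1..c}"
    unfolding gamma_le_iff by fastforce
  moreover have "finite {s \<in> GSnat r. s \<le> nat b}" "0 \<in> {s \<in> GSnat r. s \<le> nat b}"
    unfolding GSnat_def by auto
  then have "1 \<le> c"
    unfolding c_def by (metis One_nat_def Suc_leI card_gt_0_iff empty_iff)
  moreover have "Max {1..c} = c"
    using \<open>1 \<le> c\<close> by (intro Max_eqI) auto
  ultimately show ?thesis
    unfolding ltilde_def c_def[symmetric] using assms(2) by simp
qed

definition tri :: "int \<Rightarrow> int" where
  "tri k = k * (k + 1) div 2"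

definition ltilde_formula :: "nat \<Rightarrow> int \<Rightarrow> int" where
  "ltilde_formula r x = tri (x div int r) + min (x mod int r) (x div int r) + 1"

lemma tri_succ: "tri (k + 1) = tri k + k + 1"
proof -
  have "(k + 1) * (k + 1 + 1) = k * (k + 1) + 2 * (k + 1)"
    by (simp add: algebra_simps)
  then show ?thesis
    unfolding tri_def by simp
qed

lemma ltilde_formula_block:
  assumes "0 \<le> j" "j < int r"
  shows "ltilde_formula r (k * int r + j) = tri k + min j k + 1"
proof -
  have "(k * int r + j) div int r = k" "(k * int r + j) mod int r = j"
    using assms by simp_all
  then show ?thesis
    unfolding ltilde_formula_def by simp
qed

lemma ltilde_formula_minus_one: "r \<ge> 1 \<Longrightarrow> ltilde_formula r (- 1) = 0"
  using ltilde_formula_block[of "int r - 1" r "- 1"] by (simp add: tri_def)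

lemma ltilde_formula_succ:
  fixes x :: int
  assumes r: "r \<ge> 1" and "- 1 \<le> x" "x div int r < int r"
  shows "ltilde_formula r (x + 1) =
    ltilde_formula r x + (if (x + 1) mod int r \<le> (x + 1) div int r then 1 else 0)"
proof -
  define k j where "k = x div int r" and "j = x mod int r"
  have x: "x = k * int r + j" "0 \<le> j" "j < int r"
    unfolding k_def j_def using r by simp_all
  have "- 1 \<le> k"
    using zdiv_mono1[OF assms(2), of "int r"] r unfolding k_def by (simp add: div_eq_minus1)
  have "k < int r"
    using assms(3) unfolding k_def .
  have kj: "x div int r = k" "x mod int r = j"
    unfolding k_def j_def by simp_all
  show ?thesis
  proof (cases "j + 1 = int r")
    case True
    then have "x + 1 = (k + 1) * int r"
      using x by (simp add: algebra_simps)
    then have "(x + 1) div int r = k + 1" "(x + 1) mod int r = 0"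
      using r by simp_all
    then show ?thesis
      unfolding ltilde_formula_def kj
      using True \<open>- 1 \<le> k\<close> \<open>k < int r\<close> by (simp add: tri_succ min_def)
  next
    case False
    then have succ: "x + 1 = k * int r + (j + 1)" and "j + 1 < int r"
      using x by simp_all
    then have "(x + 1) div int r = k" "(x + 1) mod int r = j + 1"
      unfolding succ using x(2) by simp_all
    then show ?thesis
      unfolding ltilde_formula_def kj by (simp add: min_def)
  qed
qed

lemma card_GSnat_atMost:
  assumes r: "r \<ge> 1"
  shows "x < r * r \<Longrightarrow> int (card {s \<in> GSnat r. s \<le> x}) = ltilde_formula r (int x)"
proof (induction x)
  case 0
  have "{s \<in> GSnat r. s \<le> 0} = {0}"
    unfolding GSnat_def by auto
  then show ?case
    using ltilde_formula_block[of 0 r 0] r by (simp add: tri_def)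
next
  case (Suc x)
  have "{s \<in> GSnat r. s \<le> Suc x} = {s \<in> GSnat r. s \<le> x} \<union> (if Suc x \<in> GSnat r then {Suc x} else {})"
    by (auto simp: le_Suc_eq)
  then have "card {s \<in> GSnat r. s \<le> Suc x} = card {s \<in> GSnat r. s \<le> x} + (if Suc x \<in> GSnat r then 1 else 0)"
    by (simp add: card_insert_if)
  moreover have "Suc x \<in> GSnat r \<longleftrightarrow> int (Suc x mod r) \<le> int (Suc x div r)"
    using GSnat_iff_mod_le_div[OF r, of "Suc x"] by simp
  also have "\<dots> \<longleftrightarrow> (int x + 1) mod int r \<le> (int x + 1) div int r"
    by (simp add: zmod_int zdiv_int add.commute)
  ultimately have "int (card {s \<in> GSnat r. s \<le> Suc x}) =
      ltilde_formula r (int x) + (if (int x + 1) mod int r \<le> (int x + 1) div int r then 1 else 0)"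
    using Suc by simp
  also have "\<dots> = ltilde_formula r (int x + 1)"
  proof -
    have "x div r < r"
      using Suc.prems r by (simp add: div_less_iff_less_mult)
    then have "int x div int r < int r"
      by (metis zdiv_int of_nat_less_iff)
    then show ?thesis
      using ltilde_formula_succ[OF r, of "int x"] by simp
  qed
  finally show ?case
    by (simp add: add.commute)
qed

lemma ltilde_eq_formula:
  assumes "r \<ge> 1" "- 1 \<le> x" "x < int r * int r"
  shows "int (ltilde r x) = ltilde_formula r x"
proof (cases "x = - 1")
  case True
  then show ?thesis
    using assms(1) by (simp add: ltilde_def ltilde_formula_minus_one)
next
  case False
  then have "0 \<le> x" "nat x < r * r"
    using assms(2,3) by (simp_all add: nat_less_iff)
  then show ?thesis
    using ltilde_eq_card[OF assms(1)] card_GSnat_atMost[OF assms(1)] by simp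
qed

text \<open>\<open>\<ell>(\<alpha> r + t) - tri \<alpha>\<close>, read off from the closed form in the blocks \<open>\<alpha> - 1, \<dots>, \<alpha> + 2\<close>.\<close>
definition ltilde_offset :: "nat \<Rightarrow> int \<Rightarrow> int \<Rightarrow> int" where
  "ltilde_offset r \<alpha> t =
    (if t < 0 then min (t + int r) (\<alpha> - 1) - \<alpha> + 1
     else if t < int r then min t \<alpha> + 1
     else if t < 2 * int r then min (t - int r) (\<alpha> + 1) + \<alpha> + 2
     else min (t - 2 * int r) (\<alpha> + 2) + 2 * \<alpha> + 4)"

lemma ltilde_formula_near_block:
  fixes \<alpha> t :: int
  assumes "- int r \<le> t" "t < 3 * int r"
  shows "ltilde_formula r (\<alpha> * int r + t) = tri \<alpha> + ltilde_offset r \<alpha> t"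
proof -
  have tri_pred: "tri (\<alpha> - 1) = tri \<alpha> - \<alpha>"
    using tri_succ[of "\<alpha> - 1"] by simp
  have tri_2: "tri (\<alpha> + 2) = tri \<alpha> + 2 * \<alpha> + 3"
    using tri_succ[of \<alpha>] tri_succ[of "\<alpha> + 1"] by (simp add: add.assoc)
  consider "t < 0" | "0 \<le> t" "t < int r" | "int r \<le> t" "t < 2 * int r" | "2 * int r \<le> t"
    by linarith
  then show ?thesis
  proof cases
    case 1
    then show ?thesis
      using ltilde_formula_block[of "t + int r" r "\<alpha> - 1"] assms tri_pred
      by (simp add: ltilde_offset_def algebra_simps)
  next
    case 2
    then show ?thesis
      using ltilde_formula_block[of t r \<alpha>] by (simp add: ltilde_offset_def)
  next
    case 3
    then show ?thesis
      using ltilde_formula_block[of "t - int r" r "\<alpha> + 1"] tri_succ[of \<alpha>]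
      by (simp add: ltilde_offset_def algebra_simps)
  next
    case 4
    then show ?thesis
      using ltilde_formula_block[of "t - 2 * int r" r "\<alpha> + 2"] assms tri_2
      by (simp add: ltilde_offset_def algebra_simps)
  qed
qed

definition split_formula :: "nat \<Rightarrow> int \<Rightarrow> int \<Rightarrow> int" where
  "split_formula r N a = ltilde_formula r a + ltilde_formula r (N - a)"

lemma split_formula_window:
  fixes N \<alpha> \<beta> a :: int
  assumes h: "N div 2 = \<alpha> * int r + \<beta>" and "0 \<le> \<beta>" "\<beta> < int r" "1 \<le> \<alpha>" "\<alpha> + 2 \<le> int r"
    and "N - int r \<le> 2 * a" "2 * a \<le> N"
  shows "min (split_formula r N (N div 2)) (split_formula r N (\<alpha> * int r - 1)) \<le> split_formula r N a"
    and "\<beta> \<le> \<alpha> \<Longrightarrow> split_formula r N (\<alpha> * int r - 1) \<le> split_formula r N a"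
proof -
  define e where "e = N mod 2"
  define t where "t = a - \<alpha> * int r"
  have N: "N = 2 * (\<alpha> * int r + \<beta>) + e"
    unfolding e_def h[symmetric] by simp
  have e: "e = 0 \<or> e = 1"
    unfolding e_def by linarith
  have t: "\<beta> - int r < t" "2 * \<beta> + e \<le> 2 * t + int r" "t \<le> \<beta>"
    using assms N e unfolding t_def by arith+
  have split_at:
    "split_formula r N a = ltilde_formula r (\<alpha> * int r + t) + ltilde_formula r (\<alpha> * int r + (2 * \<beta> + e - t))"
    "split_formula r N (N div 2) = ltilde_formula r (\<alpha> * int r + \<beta>) + ltilde_formula r (\<alpha> * int r + (\<beta> + e))"
    "split_formula r N (\<alpha> * int r - 1) = ltilde_formula r (\<alpha> * int r - 1) + ltilde_formula r (\<alpha> * int r + (2 * \<beta> + e + 1))"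
    unfolding split_formula_def t_def using N h by (simp_all add: algebra_simps)
  have near: "ltilde_formula r (\<alpha> * int r + u) = tri \<alpha> + ltilde_offset r \<alpha> u"
    if "u \<in> {t, 2 * \<beta> + e - t, \<beta>, \<beta> + e, 2 * \<beta> + e + 1}" for u
    using that assms e t by (intro ltilde_formula_near_block) auto
  have near_minus_one: "ltilde_formula r (\<alpha> * int r - 1) = tri \<alpha> + ltilde_offset r \<alpha> (- 1)"
    using ltilde_formula_near_block[where t = "- 1"] assms by simp
  show "min (split_formula r N (N div 2)) (split_formula r N (\<alpha> * int r - 1)) \<le> split_formula r N a"
    and "\<beta> \<le> \<alpha> \<Longrightarrow> split_formula r N (\<alpha> * int r - 1) \<le> split_formula r N a"
    unfolding split_at near_minus_one using assms e t by (simp_all add: near ltilde_offset_def min_def split: if_splits)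
qed

lemma ltilde_formula_add_period:
  assumes "r \<ge> 1"
  shows "ltilde_formula r (x + int r) =
    ltilde_formula r x + x div int r + 1 + (if x div int r < x mod int r then 1 else 0)"
proof -
  have "int r \<noteq> 0"
    using assms by simp
  then have "(x + int r) div int r = x div int r + 1" "(x + int r) mod int r = x mod int r"
    by (rule div_add_self2) simp
  then show ?thesis
    unfolding ltilde_formula_def by (simp add: tri_succ min_def)
qed

lemma ltilde_formula_increment_mono:
  assumes r: "r \<ge> 1" and "x \<le> y"
  shows "ltilde_formula r (x + int r) - ltilde_formula r x \<le> ltilde_formula r (y + int r) - ltilde_formula r y"
proof -
  have div_le: "x div int r \<le> y div int r"
    using zdiv_mono1[OF assms(2)] r by simp
  show ?thesis
  proof (cases "x div int r = y div int r")
    case True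
    then have "x div int r * int r = y div int r * int r"
      by simp
    then have "x mod int r \<le> y mod int r"
      using div_mult_mod_eq[of x "int r"] div_mult_mod_eq[of y "int r"] \<open>x \<le> y\<close> by linarith
    then show ?thesis
      using True unfolding ltilde_formula_add_period[OF r] by auto
  next
    case False
    then have "x div int r + 1 \<le> y div int r"
      using div_le by linarith
    then show ?thesis
      unfolding ltilde_formula_add_period[OF r] by auto
  qed
qed

lemma split_formula_shift:
  assumes "r \<ge> 1" "2 * a + int r \<le> N"
  shows "split_formula r N (a + int r) \<le> split_formula r N a"
proof -
  have "ltilde_formula r (a + int r) - ltilde_formula r a
      \<le> ltilde_formula r (N - a - int r + int r) - ltilde_formula r (N - a - int r)"
    using assms by (intro ltilde_formula_increment_mono) auto
  then show ?thesis
    unfolding split_formula_def by (simp add: algebra_simps)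
qed

lemma lower_bound_by_descent:
  fixes \<phi> :: "int \<Rightarrow> 'a::linorder" and N d :: int
  assumes "0 < d"
    and sym: "\<And>a. \<phi> (N - a) = \<phi> a"
    and shift: "\<And>a. 2 * a + d \<le> N \<Longrightarrow> \<phi> (a + d) \<le> \<phi> a"
    and window: "\<And>a. N - d \<le> 2 * a \<Longrightarrow> 2 * a \<le> N \<Longrightarrow> c \<le> \<phi> a"
  shows "c \<le> \<phi> a"
proof -
  have lower_half: "c \<le> \<phi> a" if "2 * a \<le> N" for a
    using that
  proof (induction "nat (N - 2 * a)" arbitrary: a rule: less_induct)
    case less
    show ?case
    proof (cases "N - d \<le> 2 * a")
      case True
      then show ?thesis
        using window less.prems by blast
    next
      case outside: False
      have "c \<le> \<phi> (a + d)"
      proof (cases "2 * (a + d) \<le> N")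
        case True
        then show ?thesis
          using less.hyps[of "a + d"] \<open>0 < d\<close> by simp
      next
        case False
        then have "c \<le> \<phi> (N - (a + d))"
          using window outside by simp
        then show ?thesis
          unfolding sym .
      qed
      also have "\<phi> (a + d) \<le> \<phi> a"
        using shift outside by simp
      finally show ?thesis .
    qed
  qed
  show ?thesis
  proof (cases "2 * a \<le> N")
    case True
    then show ?thesis
      by (rule lower_half)
  next
    case False
    then show ?thesis
      using lower_half[of "N - a"] sym by simp
  qed
qed

lemma R_eqI:
  assumes "\<exists>a \<in> {- 1..N + 1}. m = ltilde r a + ltilde r (N - a)"
    and "\<And>a. a \<in> {- 1..N + 1} \<Longrightarrow> m \<le> ltilde r a + ltilde r (N - a)"
  shows "R r N = m"
proof -
  have "{ltilde r a + ltilde r b | a b. a \<ge> - 1 \<and> b \<ge> - 1 \<and> a + b = N}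
      = (\<lambda>a. ltilde r a + ltilde r (N - a)) ` {- 1..N + 1}"
    by (auto intro!: image_eqI) force+
  then show ?thesis
    unfolding R_def using assms by (intro Min_eqI) auto
qed

lemma split_formula_lower_bounds:
  fixes N \<alpha> \<beta> a :: int
  assumes "r \<ge> 1" "N div 2 = \<alpha> * int r + \<beta>" "0 \<le> \<beta>" "\<beta> < int r" "1 \<le> \<alpha>" "\<alpha> + 2 \<le> int r"
  shows "min (split_formula r N (N div 2)) (split_formula r N (\<alpha> * int r - 1)) \<le> split_formula r N a"
    and "\<beta> \<le> \<alpha> \<Longrightarrow> split_formula r N (\<alpha> * int r - 1) \<le> split_formula r N a"
proof -
  have descent: "c \<le> split_formula r N a"
    if "\<And>a. N - int r \<le> 2 * a \<Longrightarrow> 2 * a \<le> N \<Longrightarrow> c \<le> split_formula r N a" for c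
  proof (rule lower_bound_by_descent[where \<phi> = "split_formula r N" and d = "int r"])
    show "0 < int r"
      using assms(1) by simp
    show "split_formula r N (N - a) = split_formula r N a" for a
      unfolding split_formula_def by simp
    show "split_formula r N (a + int r) \<le> split_formula r N a" if "2 * a + int r \<le> N" for a
      using split_formula_shift[OF assms(1) that] .
  qed (rule that)
  show "min (split_formula r N (N div 2)) (split_formula r N (\<alpha> * int r - 1)) \<le> split_formula r N a"
    by (rule descent, rule split_formula_window(1)[OF assms(2-6)])
  show "split_formula r N (\<alpha> * int r - 1) \<le> split_formula r N a" if "\<beta> \<le> \<alpha>"
    by (rule descent, rule split_formula_window(2)[OF assms(2-6) _ _ that])
qed

lemma R_eq_min_of_split_formula_bound:
  assumes "r \<ge> 1" "N + 1 < int r * int r" "a\<^sub>0 \<in> {- 1..N + 1}" "a\<^sub>1 \<in> {- 1..N + 1}"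
    and bound: "\<And>a. min (split_formula r N a\<^sub>0) (split_formula r N a\<^sub>1) \<le> split_formula r N a"
  shows "R r N = min (ltilde r a\<^sub>0 + ltilde r (N - a\<^sub>0)) (ltilde r a\<^sub>1 + ltilde r (N - a\<^sub>1))"
proof -
  define f where "f a = ltilde r a + ltilde r (N - a)" for a
  have formula: "int (f a) = split_formula r N a" if "a \<in> {- 1..N + 1}" for a
    using that assms(2) unfolding f_def split_formula_def by (simp add: ltilde_eq_formula[OF assms(1)])
  have "R r N = min (f a\<^sub>0) (f a\<^sub>1)"
  proof (rule R_eqI)
    show "\<exists>a \<in> {- 1..N + 1}. min (f a\<^sub>0) (f a\<^sub>1) = ltilde r a + ltilde r (N - a)"
      using assms(3,4) unfolding f_def min_def by auto
    show "min (f a\<^sub>0) (f a\<^sub>1) \<le> ltilde r a + ltilde r (N - a)" if "a \<in> {- 1..N + 1}" for a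
    proof -
      have "int (min (f a\<^sub>0) (f a\<^sub>1)) \<le> int (f a)"
        unfolding of_nat_min formula[OF that] formula[OF assms(3)] formula[OF assms(4)]
        by (rule bound)
      then show ?thesis
        unfolding f_def by simp
    qed
  qed
  then show ?thesis
    unfolding f_def .
qed

lemma parameter_bounds:
  fixes N \<alpha> \<beta> :: int
  assumes "r \<ge> 1" "0 \<le> N" "N \<le> 2 * (int r * (int r - 1) div 2) - 2"
    and "N div 2 = \<alpha> * int r + \<beta>" "0 \<le> \<beta>" "1 \<le> \<alpha>"
  shows "N + 1 < int r * int r" "\<alpha> + 2 \<le> int r" "\<alpha> * int r - 1 \<in> {- 1..N + 1}"
proof -
  have "2 * (int r * (int r - 1) div 2) \<le> int r * (int r - 1)"
    by simp
  then have N_bound: "N + int r + 2 \<le> int r * int r"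
    using assms(3) by (simp add: algebra_simps)
  then show "N + 1 < int r * int r"
    using assms(1) by linarith
  have "1 * 1 \<le> \<alpha> * int r"
    using assms(1,6) by (intro mult_mono) auto
  moreover have "2 * (\<alpha> * int r) \<le> N"
    using assms(4,5) by linarith
  ultimately show "\<alpha> * int r - 1 \<in> {- 1..N + 1}"
    by auto
  show "\<alpha> + 2 \<le> int r"
  proof (rule ccontr)
    assume "\<not> \<alpha> + 2 \<le> int r"
    then have "(int r - 1) * int r \<le> \<alpha> * int r"
      by (intro mult_right_mono) auto
    moreover have "(int r - 1) * int r = int r * int r - int r" "int r \<le> int r * int r"
      using assms(1) by (simp_all add: algebra_simps)
    ultimately show False
      using \<open>2 * (\<alpha> * int r) \<le> N\<close> N_bound by linarith
  qed
qed

theorem proposition3p15: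
  fixes r :: nat and N alpha beta :: int
  assumes "r \<ge> 1"
    and "0 \<le> N" and "N \<le> 2 * (int r * (int r - 1) div 2) - 2"
    and "N div 2 = alpha * int r + beta" and "0 \<le> beta" and "beta < int r"
    and "alpha \<ge> 1"
  shows "(N div 2 \<notin> GS r \<longrightarrow>
            R r N = min (ltilde r (N div 2) + ltilde r ((N + 1) div 2))
                        (ltilde r (alpha * int r - 1) + ltilde r (N - alpha * int r + 1)))
       \<and> (N div 2 \<in> GS r \<longrightarrow>
            R r N = ltilde r (alpha * int r - 1) + ltilde r (N - alpha * int r + 1))"
proof -
  define h A where "h = N div 2" and "A = alpha * int r - 1"
  note bounds = parameter_bounds[OF assms(1-5,7), folded A_def]
  note lower = split_formula_lower_bounds[OF assms(1,4-7) bounds(2), folded h_def A_def]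
  have "h \<in> {- 1..N + 1}"
    unfolding h_def using assms(2) by auto
  note R_eq = R_eq_min_of_split_formula_bound[OF assms(1) bounds(1)]
  have R_min: "R r N = min (ltilde r h + ltilde r (N - h)) (ltilde r A + ltilde r (N - A))"
    by (rule R_eq[OF \<open>h \<in> _\<close> bounds(3) lower(1)])
  have R_A: "R r N = ltilde r A + ltilde r (N - A)" if "beta \<le> alpha"
  proof -
    have "min (split_formula r N A) (split_formula r N A) \<le> split_formula r N a" for a
      using lower(2)[OF that] by simp
    then show ?thesis
      using R_eq[OF bounds(3) bounds(3)] by simp
  qed
  have "h mod int r = beta" "h div int r = alpha"
    unfolding h_def assms(4) using assms(5,6) by simp_all
  then have "h \<in> GS r \<longleftrightarrow> beta \<le> alpha"
    using GS_iff_mod_le_div[OF assms(1), of h] assms(2) unfolding h_def by simp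
  moreover have halves: "(N + 1) div 2 = N - h" "N - alpha * int r + 1 = N - A"
    unfolding h_def A_def by linarith+
  ultimately show ?thesis
    unfolding halves h_def[symmetric] A_def[symmetric] using R_min R_A by auto
qed

end
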